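(* Let $T$ be a DAT with duration vector $d$, let $v$ be a module of $T$, and let $T^v$, $\tilde v$, $d^v$ be as defined below, and assume $\mathrm{mt}(T_v,d|_{B_v})<\infty$. Then for every successful attack $\mathcal{O}$ on $T^v$ there exists a successful attack $\mathcal{O}'$ on $T$ with $\mathrm{t}(\mathcal{O}',d)=\mathrm{t}(\mathcal{O},d^v)$.
   Context: A dynamic attack tree (DAT) is a finite rooted directed acyclic graph $T=(N,E)$ (edges point from a node to its children) with root $\mathrm{R}_T$, in which each node $v$ has a type $\gamma(v)\in\{\mathtt{BAS},\mathtt{OR},\mathtt{AND},\mathtt{SAND}\}$, with $\gamma(v)=\mathtt{BAS}$ if and only if $v$ is a leaf. Every node of type $\mathtt{SAND}$ comes with a fixed linear ordering $v_1,\dots,v_n$ of its children, written $v=\mathtt{SAND}(v_1,\dots,v_n)$; similarly one writes $v=\mathtt{OR}(v_1,\dots,v_n)$, $v=\mathtt{AND}(v_1,\dots,v_n)$. $N_\gamma$ denotes the set of nodes of type $\gamma$. For a node $v$, $T_v$ is the sub-DAG induced on the descendants of $v$ (all nodes reachable from $v$ by a directed path, including $v$), rooted at $v$, with the inherited types and orderings, and $B_v$ is the set of nodes of $T_v$ of type $\mathtt{BAS}$. A module of $T$ is a node $v\in N\setminus N_{\mathtt{BAS}}$ such that every directed path from a node outside $T_v$ to a node of $T_v$ passes through $v$; equivalently, every node of $T_v$ other than $v$ has all its parents inside $T_v$. An attack on $T$ is a pair $\mathcal{O}=(A,\prec)$ where $A\subseteq N_{\mathtt{BAS}}$ and $\prec$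 is a strict partial order on $A$. An attack $(A,\prec)$ reaches a node $v$, defined recursively: if $v\in N_{\mathtt{BAS}}$, iff $v\in A$; if $v=\mathtt{OR}(v_1,\dots,v_n)$, iff it reaches some $v_i$; if $v=\mathtt{AND}(v_1,\dots,v_n)$, iff it reaches all $v_i$; if $v=\mathtt{SAND}(v_1,\dots,v_n)$, iff it reaches all $v_i$ and for every $i<n$, every $a\in A\cap B_{v_i}$ and every $a'\in A\cap B_{v_{i+1}}$ one has $a\prec a'$. An attack is successful if it reaches the root. A duration vector is $d\in\mathbb{R}_{\ge0}^{N_{\mathtt{BAS}}}$. For an attack $\mathcal{O}=(A,\prec)$, $\mathrm{t}(\mathcal{O},d)=\max_C\sum_{a\in C}d_a$, the maximum over all maximal chains $C$ of $(A,\prec)$ (equal to $0$ if $A=\varnothing$). The min time $\mathrm{mt}(T,d)$ is the minimum of $\mathrm{t}(\mathcal{O},d)$ over successful attacks $\mathcal{O}$ on $T$ ($\infty$ if there are none). For a module $v$: $T^v$ is the DAT obtained from $T$ by deleting all nodes of $T_v$ other than $v$ (with their incident edges) and turning $v$ into a new leaf $\tilde v$ of type $\mathtt{BAS}$ (keeping its incoming edges and its position in the child orderings of its $\mathtt{SAND}$-parents); $d^v$ is the duration vector on the BASes of $T^v$ given by $d^v_a=d_a$ for $a\in N_{\mathtt{BAS}}\setminus B_v$ and $d^v_{\tilde v}=\mathrm{mt}(T_v,d|_{B_v})$. *)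

theory Defs
  imports "HOL-Analysis.Analysis"
begin

datatype gate = BAS | OR | AND | SAND

text \<open>A dynamic attack tree over node type 'n: node set, gate type, ordered list of
children (the order matters only for SAND nodes), and root.\<close>
record 'n dat =
  nodes :: "'n set"
  gtype   :: "'n \<Rightarrow> gate"
  ch    :: "'n \<Rightarrow> 'n list"
  root  :: "'n"

definition edges :: "('n, 'z) dat_scheme \<Rightarrow> ('n \<times> 'n) set" where
  "edges T = {(v, w). v \<in> nodes T \<and> w \<in> set (ch T v)}"

definition wf_dat :: "('n, 'z) dat_scheme \<Rightarrow> bool" where
  "wf_dat T \<longleftrightarrow> finite (nodes T) \<and> root T \<in> nodes T
     \<and> (\<forall>v\<in>nodes T. set (ch T v) \<subseteq> nodes T \<and> distinct (ch T v))
     \<and> acyclic (edges T)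
     \<and> (\<forall>v\<in>nodes T. (root T, v) \<in> (edges T)\<^sup>*)
     \<and> (\<forall>v\<in>nodes T. gtype T v = BAS \<longleftrightarrow> ch T v = [])"

definition bas_nodes :: "('n, 'z) dat_scheme \<Rightarrow> 'n set" where
  "bas_nodes T = {v \<in> nodes T. gtype T v = BAS}"

definition desc :: "('n, 'z) dat_scheme \<Rightarrow> 'n \<Rightarrow> 'n set" where
  "desc T v = {w. (v, w) \<in> (edges T)\<^sup>*}"

definition bas_below :: "('n, 'z) dat_scheme \<Rightarrow> 'n \<Rightarrow> 'n set" where
  "bas_below T v = {w \<in> desc T v. gtype T w = BAS}"

definition is_module :: "('n, 'z) dat_scheme \<Rightarrow> 'n \<Rightarrow> bool" where
  "is_module T v \<longleftrightarrow> v \<in> nodes T \<and> gtype T v \<noteq> BAS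
     \<and> (\<forall>w \<in> desc T v - {v}. \<forall>u. (u, w) \<in> edges T \<longrightarrow> u \<in> desc T v)"

definition is_attack :: "('n, 'z) dat_scheme \<Rightarrow> 'n set \<times> ('n \<times> 'n) set \<Rightarrow> bool" where
  "is_attack T Att \<longleftrightarrow> fst Att \<subseteq> bas_nodes T \<and> snd Att \<subseteq> fst Att \<times> fst Att
     \<and> irrefl (snd Att) \<and> trans (snd Att)"

inductive reaches :: "('n, 'z) dat_scheme \<Rightarrow> 'n set \<times> ('n \<times> 'n) set \<Rightarrow> 'n \<Rightarrow> bool"
  for T Att where
  r_bas: "gtype T v = BAS \<Longrightarrow> v \<in> fst Att \<Longrightarrow> reaches T Att v"
| r_or: "gtype T v = OR \<Longrightarrow> w \<in> set (ch T v) \<Longrightarrow> reaches T Att w \<Longrightarrow> reaches T Att v"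
| r_and: "gtype T v = AND \<Longrightarrow> (\<forall>w \<in> set (ch T v). reaches T Att w) \<Longrightarrow> reaches T Att v"
| r_sand: "gtype T v = SAND \<Longrightarrow> (\<forall>w \<in> set (ch T v). reaches T Att w) \<Longrightarrow>
     (\<forall>i. Suc i < length (ch T v) \<longrightarrow>
        (\<forall>a \<in> fst Att \<inter> bas_below T (ch T v ! i).
          \<forall>a' \<in> fst Att \<inter> bas_below T (ch T v ! Suc i). (a, a') \<in> snd Att)) \<Longrightarrow>
     reaches T Att v"

definition successful :: "('n, 'z) dat_scheme \<Rightarrow> 'n set \<times> ('n \<times> 'n) set \<Rightarrow> bool" where
  "successful T Att \<longleftrightarrow> is_attack T Att \<and> reaches T Att (root T)"

definition is_chain :: "('n \<times> 'n) set \<Rightarrow> 'n set \<Rightarrow> bool" where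
  "is_chain P C \<longleftrightarrow> (\<forall>a\<in>C. \<forall>b\<in>C. a \<noteq> b \<longrightarrow> (a, b) \<in> P \<or> (b, a) \<in> P)"

definition maximal_chain :: "'n set \<times> ('n \<times> 'n) set \<Rightarrow> 'n set \<Rightarrow> bool" where
  "maximal_chain Att C \<longleftrightarrow> C \<subseteq> fst Att \<and> is_chain (snd Att) C
     \<and> (\<forall>C'. C \<subseteq> C' \<and> C' \<subseteq> fst Att \<and> is_chain (snd Att) C' \<longrightarrow> C' = C)"

definition att_time :: "'n set \<times> ('n \<times> 'n) set \<Rightarrow> ('n \<Rightarrow> real) \<Rightarrow> real" where
  "att_time Att d = (if fst Att = {} then 0 else Max ((\<lambda>C. \<Sum>a\<in>C. d a) ` {C. maximal_chain Att C}))"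

text \<open>Min time (\<infinity> if no successful attack).\<close>
definition min_time :: "('n, 'z) dat_scheme \<Rightarrow> ('n \<Rightarrow> real) \<Rightarrow> ereal" where
  "min_time T d = (INF Att \<in> {Att. successful T Att}. ereal (att_time Att d))"

definition sub_dat :: "'n dat \<Rightarrow> 'n \<Rightarrow> 'n dat" where
  "sub_dat T v = \<lparr>nodes = desc T v, gtype = gtype T, ch = ch T, root = v\<rparr>"

text \<open>T^v: delete the proper descendants of v and turn v itself into a BAS leaf
(the new leaf \<tilde>v is represented by the node v).\<close>
definition contract :: "'n dat \<Rightarrow> 'n \<Rightarrow> 'n dat" where
  "contract T v = \<lparr>nodes = nodes T - (desc T v - {v}), gtype = (gtype T)(v := BAS),
                   ch = (ch T)(v := []), root = root T\<rparr>"

text \<open>d^v (d restricted to B_v is used for T_v; only values on B_v matter there).\<close>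
definition contract_dur :: "'n dat \<Rightarrow> 'n \<Rightarrow> ('n \<Rightarrow> real) \<Rightarrow> 'n \<Rightarrow> real" where
  "contract_dur T v d = d(v := real_of_ereal (min_time (sub_dat T v) d))"

end

theory Submission
  imports Defs
begin

text \<open>
  An attack \<open>(A, P)\<close> on \<open>T^v\<close> that uses the leaf \<open>v\<close> becomes an attack on \<open>T\<close> once an
  optimal attack \<open>(B, Q)\<close> on \<open>T_v\<close> is substituted for \<open>v\<close>: inside \<open>B\<close> the order is \<open>Q\<close>, and
  every other comparison is the one of \<open>P\<close> after collapsing \<open>B\<close> to \<open>v\<close>. Since \<open>v\<close> is a module,
  nodes outside \<open>T_v\<close> see the BASes of \<open>T_v\<close> only through \<open>v\<close>, so reachability in \<open>T^v\<close> and in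
  \<open>T_v\<close> lifts to \<open>T\<close>. Collapsing maps maximal chains of the substituted order onto maximal chains
  of \<open>P\<close>, and a maximal chain of \<open>P\<close> through \<open>v\<close> expands by a maximal chain of \<open>Q\<close>; as the chain
  durations of \<open>Q\<close> are bounded by and attain \<open>mt(T_v)\<close>, the two attack durations agree. An attack
  avoiding \<open>v\<close> is already an attack on \<open>T\<close>.
\<close>

lemma maximal_chainD:
  assumes "maximal_chain Att C"
  shows "C \<subseteq> fst Att" and "is_chain (snd Att) C"
  using assms unfolding maximal_chain_def by simp_all

lemma maximal_chain_insertD:
  "maximal_chain Att C \<Longrightarrow> z \<in> fst Att \<Longrightarrow> is_chain (snd Att) (insert z C) \<Longrightarrow> z \<in> C"
  unfolding maximal_chain_def by blast

lemma is_chain_subset: "is_chain P C \<Longrightarrow> C' \<subseteq> C \<Longrightarrow> is_chain P C'"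
  unfolding is_chain_def by blast

lemma maximal_chainI:
  assumes "C \<subseteq> fst Att" and "is_chain (snd Att) C"
    and "\<And>z. z \<in> fst Att \<Longrightarrow> is_chain (snd Att) (insert z C) \<Longrightarrow> z \<in> C"
  shows "maximal_chain Att C"
  unfolding maximal_chain_def
proof (intro conjI allI impI)
  fix C' assume C': "C \<subseteq> C' \<and> C' \<subseteq> fst Att \<and> is_chain (snd Att) C'"
  have "z \<in> C" if "z \<in> C'" for z
    using assms(3)[of z] is_chain_subset[of "snd Att" C' "insert z C"] C' that by blast
  with C' show "C' = C"
    by blast
qed (use assms in auto)

lemma finite_maximal_chains: "finite (fst Att) \<Longrightarrow> finite {C. maximal_chain Att C}"
  by (rule finite_subset[of _ "Pow (fst Att)"]) (auto dest: maximal_chainD)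

lemma maximal_chain_exists:
  assumes "finite (fst Att)"
  shows "\<exists>C. maximal_chain Att C"
proof -
  let ?chains = "{C. C \<subseteq> fst Att \<and> is_chain (snd Att) C}"
  have "finite ?chains"
    using assms by (auto intro: finite_subset[of _ "Pow (fst Att)"])
  moreover have "{} \<in> ?chains"
    by (simp add: is_chain_def)
  ultimately obtain C where "C \<in> ?chains" "\<forall>C'\<in>?chains. C \<subseteq> C' \<longrightarrow> C = C'"
    using finite_has_maximal[of ?chains] by blast
  then have "maximal_chain Att C"
    unfolding maximal_chain_def by auto
  then show ?thesis ..
qed

lemma maximal_chain_nonempty: "maximal_chain Att C \<Longrightarrow> fst Att \<noteq> {} \<Longrightarrow> C \<noteq> {}"
  using maximal_chain_insertD[of Att C] by (fastforce simp: is_chain_def)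

lemma att_time_ge_chain:
  assumes "finite (fst Att)" and "maximal_chain Att C"
  shows "(\<Sum>a\<in>C. d a) \<le> att_time Att d"
proof (cases "fst Att = {}")
  case True
  then show ?thesis
    using maximal_chainD(1)[OF assms(2)] by (simp add: att_time_def)
next
  case False
  then show ?thesis
    using assms by (simp add: att_time_def finite_maximal_chains)
qed

lemma att_time_attained:
  assumes "finite (fst Att)"
  shows "\<exists>C. maximal_chain Att C \<and> att_time Att d = (\<Sum>a\<in>C. d a)"
proof (cases "fst Att = {}")
  case True
  then show ?thesis
    using maximal_chain_exists[OF assms] maximal_chainD(1) by (fastforce simp: att_time_def)
next
  case False
  have "Max ((\<lambda>C. \<Sum>a\<in>C. d a) ` {C. maximal_chain Att C}) \<in> (\<lambda>C. \<Sum>a\<in>C. d a) ` {C. maximal_chain Att C}"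
    using maximal_chain_exists[OF assms] finite_maximal_chains[OF assms] by (intro Max_in) auto
  then show ?thesis
    using False by (auto simp: att_time_def)
qed

lemma att_time_cong:
  assumes "\<And>a. a \<in> fst Att \<Longrightarrow> d a = d' a"
  shows "att_time Att d = att_time Att d'"
proof -
  have "(\<lambda>C. \<Sum>a\<in>C. d a) ` {C. maximal_chain Att C} = (\<lambda>C. \<Sum>a\<in>C. d' a) ` {C. maximal_chain Att C}"
    using assms by (intro image_cong refl sum.cong) (auto dest: maximal_chainD)
  then show ?thesis
    by (simp only: att_time_def)
qed

lemma att_time_le_if_chains_dominate:
  assumes "finite (fst Att)" and "finite (fst Att')"
    and "\<And>C. maximal_chain Att C \<Longrightarrow> \<exists>C'. maximal_chain Att' C' \<and> (\<Sum>a\<in>C. d a) \<le> (\<Sum>a\<in>C'. d' a)"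
  shows "att_time Att d \<le> att_time Att' d'"
proof -
  obtain C where C: "maximal_chain Att C" "att_time Att d = (\<Sum>a\<in>C. d a)"
    using att_time_attained[OF assms(1)] by blast
  then obtain C' where "maximal_chain Att' C'" "(\<Sum>a\<in>C. d a) \<le> (\<Sum>a\<in>C'. d' a)"
    using assms(3) by blast
  with C show ?thesis
    using att_time_ge_chain[OF assms(2), of C' d'] by linarith
qed

definition collapse :: "'a set \<Rightarrow> 'a \<Rightarrow> 'a \<Rightarrow> 'a" where
  "collapse B v x = (if x \<in> B then v else x)"

locale order_substitution =
  fixes A :: "'a set" and P :: "('a \<times> 'a) set" and B :: "'a set" and Q :: "('a \<times> 'a) set" and v :: 'a
  assumes finite_A: "finite A" and finite_B: "finite B"
    and irrefl_P: "irrefl P" and trans_P: "trans P"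
    and Q_on_B: "Q \<subseteq> B \<times> B" and irrefl_Q: "irrefl Q" and trans_Q: "trans Q"
    and v_in_A: "v \<in> A" and B_nonempty: "B \<noteq> {}" and disjoint: "A \<inter> B = {}"
begin

abbreviation A' :: "'a set" where "A' \<equiv> A - {v} \<union> B"
abbreviation f :: "'a \<Rightarrow> 'a" where "f \<equiv> collapse B v"

definition P' :: "('a \<times> 'a) set" where
  "P' = {(x, y). x \<in> A' \<and> y \<in> A' \<and> (if x \<in> B \<and> y \<in> B then (x, y) \<in> Q else (f x, f y) \<in> P)}"

lemma mem_P':
  "(x, y) \<in> P' \<longleftrightarrow> x \<in> A' \<and> y \<in> A' \<and> (if x \<in> B \<and> y \<in> B then (x, y) \<in> Q else (f x, f y) \<in> P)"
  by (simp add: P'_def)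

lemma v_notin_A': "v \<notin> A'"
  using v_in_A disjoint by auto

lemma P'_inside_B: "x \<in> B \<Longrightarrow> y \<in> B \<Longrightarrow> (x, y) \<in> P' \<longleftrightarrow> (x, y) \<in> Q"
  using Q_on_B by (auto simp: mem_P')

lemma P'_if_collapse: "x \<in> A' \<Longrightarrow> y \<in> A' \<Longrightarrow> (f x, f y) \<in> P \<Longrightarrow> (x, y) \<in> P'"
  using irrefl_P by (auto simp: mem_P' collapse_def irrefl_def)

lemma P'_strict_partial_order: "P' \<subseteq> A' \<times> A'" "irrefl P'" "trans P'"
proof -
  show "P' \<subseteq> A' \<times> A'" "irrefl P'"
    using irrefl_P irrefl_Q by (auto simp: mem_P' irrefl_def)
  show "trans P'"
  proof (rule transI)
    fix x y z assume xy: "(x, y) \<in> P'" and yz: "(y, z) \<in> P'"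
    show "(x, z) \<in> P'"
    proof (cases "x \<in> B \<and> y \<in> B \<and> z \<in> B")
      case True
      then show ?thesis
        using xy yz trans_Q by (auto simp: P'_inside_B dest: transD)
    next
      case False
      \<comment> \<open>at most one of the two steps stays inside \<open>B\<close>; the other is a \<open>P\<close>-step after collapsing\<close>
      have "(f x, f y) \<in> P \<or> f x = f y" "(f y, f z) \<in> P \<or> f y = f z"
        using xy yz by (auto simp: mem_P' collapse_def split: if_splits)
      moreover have "(f x, f y) \<in> P \<or> (f y, f z) \<in> P"
        using xy yz False by (auto simp: mem_P' split: if_splits)
      ultimately have "(f x, f z) \<in> P"
        using trans_P by (metis transD)
      then show ?thesis
        using P'_if_collapse xy yz by (auto simp: mem_P')
    qed
  qed
qed

lemma collapse_outside: "x \<notin> B \<Longrightarrow> f x = x"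
  by (simp add: collapse_def)

lemma collapse_inside: "x \<in> B \<Longrightarrow> f x = v"
  by (simp add: collapse_def)

lemma is_chain_P'_iff:
  assumes "C \<subseteq> A'"
  shows "is_chain P' C \<longleftrightarrow> is_chain P (f ` C) \<and> is_chain Q (C \<inter> B)"
proof
  assume chain: "is_chain P' C"
  show "is_chain P (f ` C) \<and> is_chain Q (C \<inter> B)"
    unfolding is_chain_def
  proof (intro conjI ballI impI)
    fix x y assume "x \<in> C \<inter> B" "y \<in> C \<inter> B" "x \<noteq> y"
    then show "(x, y) \<in> Q \<or> (y, x) \<in> Q"
      using chain P'_inside_B unfolding is_chain_def by blast
  next
    fix a b assume "a \<in> f ` C" "b \<in> f ` C" "a \<noteq> b"
    then obtain x y where xy: "x \<in> C" "y \<in> C" "a = f x" "b = f y"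
      by blast
    with \<open>a \<noteq> b\<close> have not_both: "\<not> (x \<in> B \<and> y \<in> B)" and "x \<noteq> y"
      using collapse_inside by auto
    then have "(x, y) \<in> P' \<or> (y, x) \<in> P'"
      using chain xy unfolding is_chain_def by blast
    with xy not_both show "(a, b) \<in> P \<or> (b, a) \<in> P"
      unfolding mem_P' by auto
  qed
next
  assume chains: "is_chain P (f ` C) \<and> is_chain Q (C \<inter> B)"
  show "is_chain P' C"
    unfolding is_chain_def
  proof (intro ballI impI)
    fix x y assume xy: "x \<in> C" "y \<in> C" "x \<noteq> y"
    show "(x, y) \<in> P' \<or> (y, x) \<in> P'"
    proof (cases "x \<in> B \<and> y \<in> B")
      case True
      then show ?thesis
        using chains xy P'_inside_B unfolding is_chain_def by blast
    next
      case False
      \<comment> \<open>elements outside \<open>B\<close> are distinct from \<open>v\<close>, so collapsing keeps \<open>x\<close> and \<open>y\<close> apart\<close>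
      then have "f x \<noteq> f y"
        using xy assms by (auto simp: collapse_def)
      then have "(f x, f y) \<in> P \<or> (f y, f x) \<in> P"
        using chains xy unfolding is_chain_def by blast
      then show ?thesis
        using P'_if_collapse xy assms by blast
    qed
  qed
qed

lemma maximal_chain_collapse:
  assumes C': "maximal_chain (A', P') C'"
  shows "maximal_chain (A, P) (f ` C')"
proof (rule maximal_chainI)
  have C'_sub: "C' \<subseteq> A'" and chain: "is_chain P' C'"
    using maximal_chainD[OF C'] by simp_all
  then show "f ` C' \<subseteq> fst (A, P)"
    using v_in_A by (auto simp: collapse_def)
  show "is_chain (snd (A, P)) (f ` C')"
    using chain is_chain_P'_iff[OF C'_sub] by simp
  fix z assume z: "z \<in> fst (A, P)" and ext: "is_chain (snd (A, P)) (insert z (f ` C'))"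
  show "z \<in> f ` C'"
  proof (cases "z = v")
    case True
    show ?thesis
    proof (rule ccontr)
      assume "z \<notin> f ` C'"
      then have outside: "C' \<inter> B = {}"
        using True by (auto simp: collapse_def)
      obtain b where b: "b \<in> B"
        using B_nonempty by auto
      have "f ` insert b C' = insert z (f ` C')" and "insert b C' \<inter> B = {b}"
        using True b outside by (auto simp: collapse_def)
      moreover have "is_chain Q {b}"
        by (simp add: is_chain_def)
      ultimately have "is_chain P (f ` insert b C') \<and> is_chain Q (insert b C' \<inter> B)"
        using ext by simp
      then have "is_chain P' (insert b C')"
        using is_chain_P'_iff[of "insert b C'"] C'_sub b by blast
      then have "b \<in> C'"
        using maximal_chain_insertD[OF C'] b by simp
      with outside b show False
        by blast
    qed
  next
    case False
    then have z_A': "z \<in> A'" and "z \<notin> B"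
      using z disjoint by auto
    then have "f ` insert z C' = insert z (f ` C')" "insert z C' \<inter> B = C' \<inter> B"
      by (auto simp: collapse_def)
    then have "is_chain P' (insert z C')"
      using ext chain is_chain_P'_iff[of "insert z C'"] is_chain_P'_iff[OF C'_sub] C'_sub z_A' by simp
    then have "z \<in> C'"
      using maximal_chain_insertD[OF C'] z_A' by simp
    then show ?thesis
      using \<open>z \<notin> B\<close> by (force simp: collapse_def)
  qed
qed

lemma maximal_chain_restrict:
  assumes C': "maximal_chain (A', P') C'" and meets_B: "C' \<inter> B \<noteq> {}"
  shows "maximal_chain (B, Q) (C' \<inter> B)"
proof (rule maximal_chainI)
  have C'_sub: "C' \<subseteq> A'" and chain: "is_chain P' C'"
    using maximal_chainD[OF C'] by simp_all
  show "C' \<inter> B \<subseteq> fst (B, Q)"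
    by simp
  show "is_chain (snd (B, Q)) (C' \<inter> B)"
    using chain is_chain_P'_iff[OF C'_sub] by simp
  fix z assume z: "z \<in> fst (B, Q)" and ext: "is_chain (snd (B, Q)) (insert z (C' \<inter> B))"
  have "f ` insert z C' = f ` C'" "insert z C' \<inter> B = insert z (C' \<inter> B)"
    using z meets_B by (auto simp: collapse_def)
  then have "is_chain P' (insert z C')"
    using ext chain is_chain_P'_iff[of "insert z C'"] is_chain_P'_iff[OF C'_sub] C'_sub z by simp
  then show "z \<in> C' \<inter> B"
    using maximal_chain_insertD[OF C'] z by simp
qed

lemma maximal_chain_avoiding:
  assumes C: "maximal_chain (A, P) C" and v_notin_C: "v \<notin> C"
  shows "maximal_chain (A', P') C"
proof (rule maximal_chainI)
  have C_sub: "C \<subseteq> A" and chain: "is_chain P C"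
    using maximal_chainD[OF C] by simp_all
  then have C_A': "C \<subseteq> A'" and outside: "C \<inter> B = {}" and collapse_C: "f ` C = C"
    using v_notin_C disjoint by (auto simp: collapse_def)
  then show "C \<subseteq> fst (A', P')"
    by simp
  show "is_chain (snd (A', P')) C"
    using chain is_chain_P'_iff[OF C_A'] outside collapse_C by (simp add: is_chain_def)
  fix z assume z: "z \<in> fst (A', P')" and ext: "is_chain (snd (A', P')) (insert z C)"
  then have "is_chain P (insert (f z) C)"
    using is_chain_P'_iff[of "insert z C"] C_A' collapse_C by simp
  moreover have "f z \<in> A"
    using z v_in_A by (auto simp: collapse_def)
  ultimately have "f z \<in> C"
    using maximal_chain_insertD[OF C] by simp
  then show "z \<in> C"
    using v_notin_C by (metis collapse_inside collapse_outside)
qed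

lemma maximal_chain_expand:
  assumes C: "maximal_chain (A, P) C" and v_in_C: "v \<in> C" and M: "maximal_chain (B, Q) M"
  shows "maximal_chain (A', P') (C - {v} \<union> M)"
proof (rule maximal_chainI)
  have C_sub: "C \<subseteq> A" and chain: "is_chain P C" and M_sub: "M \<subseteq> B" and chain_M: "is_chain Q M"
    using maximal_chainD[OF C] maximal_chainD[OF M] by simp_all
  have "M \<noteq> {}"
    using maximal_chain_nonempty[OF M] B_nonempty by simp
  then have collapse_CM: "f ` (C - {v} \<union> M) = C" and CM_B: "(C - {v} \<union> M) \<inter> B = M"
    using C_sub M_sub v_in_C disjoint by (auto simp: collapse_def)
  have CM_A': "C - {v} \<union> M \<subseteq> A'"
    using C_sub M_sub by auto
  then show "C - {v} \<union> M \<subseteq> fst (A', P')"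
    by simp
  show "is_chain (snd (A', P')) (C - {v} \<union> M)"
    using is_chain_P'_iff[OF CM_A'] collapse_CM CM_B chain chain_M by simp
  fix z assume z: "z \<in> fst (A', P')" and ext: "is_chain (snd (A', P')) (insert z (C - {v} \<union> M))"
  then have "is_chain P (insert (f z) C)" and ext_B: "is_chain Q (insert z (C - {v} \<union> M) \<inter> B)"
    using is_chain_P'_iff[of "insert z (C - {v} \<union> M)"] CM_A' collapse_CM by auto
  show "z \<in> C - {v} \<union> M"
  proof (cases "z \<in> B")
    case True
    then have "is_chain Q (insert z M)"
      using ext_B CM_B by (metis Int_insert_left_if1)
    then show ?thesis
      using maximal_chain_insertD[OF M] True by simp
  next
    case False
    then have "f z = z" "z \<in> A" "z \<noteq> v"
      using z by (auto simp: collapse_def)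
    then show ?thesis
      using maximal_chain_insertD[OF C] \<open>is_chain P (insert (f z) C)\<close> by simp
  qed
qed

lemma finite_A': "finite A'"
  using finite_A finite_B by simp

lemma chain_weight_le_collapse:
  assumes C': "maximal_chain (A', P') C'"
  shows "(\<Sum>a\<in>C'. d a) \<le> (\<Sum>a\<in>f ` C'. (d(v := att_time (B, Q) d)) a)"
proof -
  have "C' \<subseteq> A'"
    using maximal_chainD(1)[OF C'] by simp
  then have fin: "finite C'" and v_notin: "v \<notin> C'"
    using finite_A' finite_subset v_notin_A' by auto
  show ?thesis
  proof (cases "C' \<inter> B = {}")
    case True
    then have "f ` C' = C'"
      by (auto simp: collapse_def image_iff)
    moreover have "(\<Sum>a\<in>C'. (d(v := att_time (B, Q) d)) a) = (\<Sum>a\<in>C'. d a)"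
      using v_notin by (intro sum.cong) auto
    ultimately show ?thesis
      by simp
  next
    case False
    then have collapse_C': "f ` C' = insert v (C' - B)"
      by (auto simp: collapse_def image_iff)
    have "(\<Sum>a\<in>C' \<inter> B. d a) \<le> att_time (B, Q) d"
      using att_time_ge_chain[OF _ maximal_chain_restrict[OF C' False]] finite_B by simp
    moreover have "(\<Sum>a\<in>C'. d a) = (\<Sum>a\<in>C' \<inter> B. d a) + (\<Sum>a\<in>C' - B. d a)"
      using fin by (rule sum.Int_Diff)
    moreover have "(\<Sum>a\<in>C' - B. (d(v := att_time (B, Q) d)) a) = (\<Sum>a\<in>C' - B. d a)"
      using v_notin by (intro sum.cong) auto
    ultimately show ?thesis
      unfolding collapse_C' using fin v_notin by simp
  qed
qed

lemma chain_weight_le_expand: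
  assumes C: "maximal_chain (A, P) C"
  shows "\<exists>C'. maximal_chain (A', P') C' \<and> (\<Sum>a\<in>C. (d(v := att_time (B, Q) d)) a) \<le> (\<Sum>a\<in>C'. d a)"
proof (cases "v \<in> C")
  case False
  have "(\<Sum>a\<in>C. (d(v := att_time (B, Q) d)) a) = (\<Sum>a\<in>C. d a)"
    using False by (intro sum.cong) auto
  with maximal_chain_avoiding[OF C False] show ?thesis
    by (intro exI[of _ C]) simp
next
  case True
  obtain M where M: "maximal_chain (B, Q) M" and weight_M: "att_time (B, Q) d = (\<Sum>a\<in>M. d a)"
    using att_time_attained[of "(B, Q)"] finite_B by auto
  have "C \<subseteq> A" and "M \<subseteq> B"
    using maximal_chainD(1)[OF C] maximal_chainD(1)[OF M] by simp_all
  then have fin: "finite C" "finite M" and disj: "(C - {v}) \<inter> M = {}"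
    using finite_subset[OF _ finite_A] finite_subset[OF _ finite_B] disjoint by auto
  have "(\<Sum>a\<in>C. (d(v := att_time (B, Q) d)) a) = att_time (B, Q) d + (\<Sum>a\<in>C - {v}. d a)"
    using fin True by (simp add: sum.remove)
  also have "\<dots> = (\<Sum>a\<in>C - {v} \<union> M. d a)"
    using fin disj weight_M by (simp add: sum.union_disjoint)
  finally show ?thesis
    using maximal_chain_expand[OF C True M] by (intro exI[of _ "C - {v} \<union> M"]) simp
qed

theorem att_time_substituted:
  "att_time (A', P') d = att_time (A, P) (d(v := att_time (B, Q) d))"
proof (rule antisym)
  show "att_time (A', P') d \<le> att_time (A, P) (d(v := att_time (B, Q) d))"
  proof (rule att_time_le_if_chains_dominate)
    fix C' assume C': "maximal_chain (A', P') C'"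
    show "\<exists>C. maximal_chain (A, P) C \<and> (\<Sum>a\<in>C'. d a) \<le> (\<Sum>a\<in>C. (d(v := att_time (B, Q) d)) a)"
      using maximal_chain_collapse[OF C'] chain_weight_le_collapse[OF C'] by blast
  qed (simp_all add: finite_A finite_B)
  show "att_time (A, P) (d(v := att_time (B, Q) d)) \<le> att_time (A', P') d"
  proof (rule att_time_le_if_chains_dominate)
    fix C assume "maximal_chain (A, P) C"
    then show "\<exists>C'. maximal_chain (A', P') C' \<and> (\<Sum>a\<in>C. (d(v := att_time (B, Q) d)) a) \<le> (\<Sum>a\<in>C'. d a)"
      by (rule chain_weight_le_expand)
  qed (simp_all add: finite_A finite_B)
qed

end

lemma edgesI: "w \<in> nodes T \<Longrightarrow> c \<in> set (ch T w) \<Longrightarrow> (w, c) \<in> edges T"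
  unfolding edges_def by auto

lemma desc_refl: "v \<in> desc T v"
  unfolding desc_def by auto

lemma desc_trans: "w \<in> desc T v \<Longrightarrow> u \<in> desc T w \<Longrightarrow> u \<in> desc T v"
  unfolding desc_def by auto

lemma desc_edge: "w \<in> desc T v \<Longrightarrow> (w, c) \<in> edges T \<Longrightarrow> c \<in> desc T v"
  unfolding desc_def by (auto intro: rtrancl_into_rtrancl)

lemma wf_dat_finite_nodes: "wf_dat T \<Longrightarrow> finite (nodes T)"
  unfolding wf_dat_def by simp

lemma wf_dat_root_in_nodes: "wf_dat T \<Longrightarrow> root T \<in> nodes T"
  unfolding wf_dat_def by simp

lemma is_module_in_nodes: "is_module T v \<Longrightarrow> v \<in> nodes T"
  unfolding is_module_def by simp

lemma root_sub_dat: "root (sub_dat T v) = v"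
  by (simp add: sub_dat_def)

lemma root_contract: "root (contract T v) = root T"
  by (simp add: contract_def)

lemma wf_dat_child_in_nodes: "wf_dat T \<Longrightarrow> w \<in> nodes T \<Longrightarrow> c \<in> set (ch T w) \<Longrightarrow> c \<in> nodes T"
  unfolding wf_dat_def by blast

lemma desc_subset_nodes:
  assumes "wf_dat T" and "v \<in> nodes T"
  shows "desc T v \<subseteq> nodes T"
proof
  fix x assume "x \<in> desc T v"
  then have "(v, x) \<in> (edges T)\<^sup>*"
    unfolding desc_def by simp
  then show "x \<in> nodes T"
    by (induction rule: rtrancl_induct) (use assms wf_dat_child_in_nodes in \<open>auto simp: edges_def\<close>)
qed

lemma desc_child:
  assumes "wf_dat T" and "v \<in> nodes T" and "w \<in> desc T v" and "c \<in> set (ch T w)"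
  shows "c \<in> desc T v"
proof -
  have "w \<in> nodes T"
    using desc_subset_nodes[OF assms(1,2)] assms(3) by blast
  then show ?thesis
    using desc_edge[OF assms(3) edgesI] assms(4) by blast
qed

lemma edges_sub_dat_subset:
  assumes "wf_dat T" and "v \<in> nodes T"
  shows "edges (sub_dat T v) \<subseteq> edges T"
  using desc_subset_nodes[OF assms] by (auto simp: edges_def sub_dat_def)

lemma desc_sub_dat:
  assumes "wf_dat T" and "v \<in> nodes T" and "c \<in> desc T v"
  shows "desc (sub_dat T v) c = desc T c"
proof
  show "desc (sub_dat T v) c \<subseteq> desc T c"
    using rtrancl_mono[OF edges_sub_dat_subset[OF assms(1,2)]] by (auto simp: desc_def)
  show "desc T c \<subseteq> desc (sub_dat T v) c"
  proof
    fix x assume "x \<in> desc T c"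
    then have "(c, x) \<in> (edges T)\<^sup>*"
      unfolding desc_def by simp
    then have "(c, x) \<in> (edges (sub_dat T v))\<^sup>* \<and> x \<in> desc T v"
    proof (induction rule: rtrancl_induct)
      case (step y z)
      then have "(y, z) \<in> edges (sub_dat T v)"
        unfolding edges_def sub_dat_def by auto
      with step show ?case
        using desc_edge by (auto intro: rtrancl_into_rtrancl)
    qed (use assms in simp)
    then show "x \<in> desc (sub_dat T v) c"
      unfolding desc_def by simp
  qed
qed

lemma bas_below_sub_dat:
  "wf_dat T \<Longrightarrow> v \<in> nodes T \<Longrightarrow> c \<in> desc T v \<Longrightarrow> bas_below (sub_dat T v) c = bas_below T c"
  using desc_sub_dat[of T v c] unfolding bas_below_def by (simp add: sub_dat_def)

lemma bas_nodes_sub_dat: "bas_nodes (sub_dat T v) = bas_below T v"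
  by (simp add: bas_nodes_def bas_below_def sub_dat_def)

lemma wf_sub_dat:
  assumes wf: "wf_dat T" and v: "v \<in> nodes T"
  shows "wf_dat (sub_dat T v)"
proof -
  have "finite (desc T v)"
    using finite_subset[OF desc_subset_nodes[OF assms] wf_dat_finite_nodes[OF wf]] .
  moreover have "acyclic (edges (sub_dat T v))"
    using wf edges_sub_dat_subset[OF assms] acyclic_subset unfolding wf_dat_def by blast
  moreover have "(v, x) \<in> (edges (sub_dat T v))\<^sup>*" if "x \<in> desc T v" for x
    using desc_sub_dat[OF wf v desc_refl] that unfolding desc_def by blast
  ultimately show ?thesis
    using wf desc_subset_nodes[OF assms] desc_child[OF assms] desc_refl[of v T]
    unfolding wf_dat_def by (simp add: sub_dat_def) blast
qed

lemma wf_dat_inner_has_child: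
  assumes "wf_dat T" and "w \<in> nodes T" and "gtype T w \<noteq> BAS"
  obtains c where "c \<in> set (ch T w)"
proof -
  have "ch T w \<noteq> []"
    using assms unfolding wf_dat_def by blast
  then show ?thesis
    using that by (cases "ch T w") auto
qed

lemma reaches_nonempty:
  assumes "reaches X Att w" and "wf_dat X" and "w \<in> nodes X"
  shows "fst Att \<noteq> {}"
  using assms
proof (induction rule: reaches.induct)
  case (r_or w c)
  have "c \<in> nodes X"
    using wf_dat_child_in_nodes[OF r_or.prems r_or.hyps(2)] .
  then show ?case
    using r_or.IH r_or.prems(1) by blast
next
  case (r_and w)
  obtain c where c: "c \<in> set (ch X w)"
    using wf_dat_inner_has_child[OF r_and.prems] r_and.hyps(1) by auto
  have "c \<in> nodes X"
    using wf_dat_child_in_nodes[OF r_and.prems c] .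
  then show ?case
    using r_and.IH c r_and.prems(1) by blast
next
  case (r_sand w)
  obtain c where c: "c \<in> set (ch X w)"
    using wf_dat_inner_has_child[OF r_sand.prems] r_sand.hyps(1) by auto
  have "c \<in> nodes X"
    using wf_dat_child_in_nodes[OF r_sand.prems c] .
  then show ?case
    using r_sand.IH c r_sand.prems(1) by blast
qed auto

lemma min_time_attained:
  assumes fin: "finite (nodes X)" and finite_min: "min_time X d < \<infinity>"
  shows "\<exists>Att. successful X Att \<and> min_time X d = ereal (att_time Att d)"
proof -
  let ?S = "{Att. successful X Att}"
  let ?times = "(\<lambda>Att. ereal (att_time Att d)) ` ?S"
  have "?S \<subseteq> Pow (nodes X) \<times> Pow (nodes X \<times> nodes X)"
    unfolding successful_def is_attack_def bas_nodes_def by auto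
  then have "finite ?S"
    using fin by (simp add: finite_subset)
  then have finite_times: "finite ?times"
    by simp
  have nonempty_times: "?times \<noteq> {}"
  proof
    assume "?times = {}"
    then have "min_time X d = \<infinity>"
      unfolding min_time_def by (simp only: Inf_empty top_ereal_def)
    with finite_min show False
      by simp
  qed
  have "min_time X d = Min ?times"
    unfolding min_time_def by (rule Min_Inf[symmetric, OF finite_times nonempty_times])
  also have "\<dots> \<in> ?times"
    by (rule Min_in[OF finite_times nonempty_times])
  finally have "min_time X d \<in> ?times" .
  then show ?thesis
    by auto
qed

lemma edges_contract_outside: "(z, y) \<in> edges T \<Longrightarrow> z \<notin> desc T v \<Longrightarrow> (z, y) \<in> edges (contract T v)"
  using desc_refl[of v T] by (auto simp: edges_def contract_def)

lemma rtrancl_edges_contract_outside: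
  assumes "(x, y) \<in> (edges T)\<^sup>*" and "y \<notin> desc T v"
  shows "(x, y) \<in> (edges (contract T v))\<^sup>*"
  using assms
proof (induction rule: rtrancl_induct)
  case (step z y)
  have "z \<notin> desc T v"
    using desc_edge[of z T v y] step.hyps(2) step.prems by blast
  then show ?case
    using step.IH edges_contract_outside[OF step.hyps(2)] by (simp add: rtrancl.rtrancl_into_rtrancl)
qed simp

lemma rtrancl_edges_contract_to_module:
  assumes md: "is_module T v" and "(x, y) \<in> (edges T)\<^sup>*" and "y \<in> desc T v" and "x \<notin> desc T v - {v}"
  shows "(x, v) \<in> (edges (contract T v))\<^sup>*"
  using assms(2-)
proof (induction rule: rtrancl_induct)
  case (step z y)
  show ?case
  proof (cases "z \<in> desc T v")
    case True
    with step.prems(2) show ?thesis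
      using step.IH by blast
  next
    case False
    \<comment> \<open>the path enters \<open>T_v\<close> through an edge into \<open>v\<close>, since \<open>v\<close> is a module\<close>
    have "y = v"
      using md step.hyps(2) step.prems(1) False unfolding is_module_def by blast
    then show ?thesis
      using rtrancl_edges_contract_outside[OF step.hyps(1) False] edges_contract_outside[OF step.hyps(2) False]
      by (simp add: rtrancl.rtrancl_into_rtrancl)
  qed
qed simp

lemma bas_below_contract_outside:
  assumes "a \<in> bas_below T x" and "a \<notin> desc T v"
  shows "a \<in> bas_below (contract T v) x"
proof -
  have "(x, a) \<in> (edges T)\<^sup>*"
    using assms(1) unfolding bas_below_def desc_def by simp
  then have "(x, a) \<in> (edges (contract T v))\<^sup>*"
    using assms(2) by (rule rtrancl_edges_contract_outside)
  moreover have "a \<noteq> v"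
    using assms(2) desc_refl[of v T] by blast
  ultimately show ?thesis
    using assms(1) unfolding bas_below_def desc_def by (simp add: contract_def)
qed

lemma bas_below_contract_module:
  assumes "is_module T v" and "a \<in> bas_below T x" and "a \<in> desc T v" and "x \<notin> desc T v - {v}"
  shows "v \<in> bas_below (contract T v) x"
proof -
  have "(x, a) \<in> (edges T)\<^sup>*"
    using assms(2) unfolding bas_below_def desc_def by simp
  then have "(x, v) \<in> (edges (contract T v))\<^sup>*"
    by (rule rtrancl_edges_contract_to_module[OF assms(1) _ assms(3,4)])
  then show ?thesis
    unfolding bas_below_def desc_def by (simp add: contract_def)
qed

lemma module_child_outside:
  assumes "is_module T v" and "w \<in> nodes T" and "w \<notin> desc T v" and "c \<in> set (ch T w)"
  shows "c \<notin> desc T v - {v}"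
  using assms edgesI[OF assms(2,4)] unfolding is_module_def by blast

lemma bas_nodes_contract:
  assumes "v \<in> nodes T"
  shows "bas_nodes (contract T v) = bas_nodes T - desc T v \<union> {v}"
  using assms desc_refl[of v T] unfolding bas_nodes_def by (auto simp: contract_def)

lemma root_notin_proper_desc:
  assumes wf: "wf_dat T" and v: "v \<in> nodes T"
  shows "root T \<notin> desc T v - {v}"
proof
  assume "root T \<in> desc T v - {v}"
  then have "(v, root T) \<in> (edges T)\<^sup>+"
    unfolding desc_def by (auto simp: rtrancl_eq_or_trancl)
  moreover have "(root T, v) \<in> (edges T)\<^sup>*"
    using wf v unfolding wf_dat_def by (elim conjE) blast
  ultimately have "(v, v) \<in> (edges T)\<^sup>+"
    by (rule trancl_rtrancl_trancl)
  moreover have "acyclic (edges T)"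
    using wf unfolding wf_dat_def by (elim conjE)
  ultimately show False
    unfolding acyclic_def by blast
qed

lemma collapse_in_bas_below_contract:
  assumes md: "is_module T v" and A_outside: "A \<inter> desc T v \<subseteq> {v}" and B_inside: "B \<subseteq> desc T v"
    and v_in_A: "B \<noteq> {} \<Longrightarrow> v \<in> A"
    and x: "x \<in> A - {v} \<union> B" "x \<in> bas_below T y" and y: "y \<notin> desc T v - {v}"
  shows "collapse B v x \<in> A \<inter> bas_below (contract T v) y"
proof (cases "x \<in> B")
  case True
  then have "v \<in> bas_below (contract T v) y"
    using bas_below_contract_module[OF md x(2) _ y] B_inside by blast
  then show ?thesis
    using True v_in_A by (auto simp: collapse_def)
next
  case False
  then have "x \<in> A - {v}" and "x \<notin> desc T v"
    using x(1) A_outside by auto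
  then show ?thesis
    using False bas_below_contract_outside[OF x(2)] by (simp add: collapse_def)
qed

lemma precedes_lift_from_sub_dat:
  assumes wf: "wf_dat T" and v: "v \<in> nodes T" and c: "c \<in> desc T v" and c': "c' \<in> desc T v"
    and A2_inside: "A2 \<inter> desc T v \<subseteq> B" and Q_sub: "Q \<subseteq> P2"
    and prec: "\<forall>a\<in>B \<inter> bas_below (sub_dat T v) c. \<forall>a'\<in>B \<inter> bas_below (sub_dat T v) c'. (a, a') \<in> Q"
  shows "\<forall>a\<in>A2 \<inter> bas_below T c. \<forall>a'\<in>A2 \<inter> bas_below T c'. (a, a') \<in> P2"
proof (intro ballI)
  fix a a' assume a: "a \<in> A2 \<inter> bas_below T c" and a': "a' \<in> A2 \<inter> bas_below T c'"
  then have "a \<in> desc T v" and "a' \<in> desc T v"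
    using desc_trans[OF c] desc_trans[OF c'] unfolding bas_below_def by auto
  with a a' have "a \<in> B \<inter> bas_below (sub_dat T v) c" and "a' \<in> B \<inter> bas_below (sub_dat T v) c'"
    using bas_below_sub_dat[OF wf v c] bas_below_sub_dat[OF wf v c'] A2_inside by auto
  then show "(a, a') \<in> P2"
    using prec Q_sub by blast
qed

lemma reaches_lift_from_sub_dat:
  assumes wf: "wf_dat T" and v: "v \<in> nodes T"
    and reach: "reaches (sub_dat T v) (B, Q) w" and w: "w \<in> desc T v"
    and B_sub: "B \<subseteq> A2" and A2_inside: "A2 \<inter> desc T v \<subseteq> B" and Q_sub: "Q \<subseteq> P2"
  shows "reaches T (A2, P2) w"
  using reach w
proof (induction rule: reaches.induct)
  case (r_bas w)
  show ?case
    by (rule reaches.r_bas) (use r_bas B_sub in \<open>auto simp: sub_dat_def\<close>)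
next
  case (r_or w c)
  have c: "c \<in> set (ch T w)"
    using r_or.hyps(2) by (simp add: sub_dat_def)
  then have "reaches T (A2, P2) c"
    using r_or.IH desc_child[OF wf v r_or.prems c] by blast
  with c show ?case
    using r_or.hyps(1) reaches.r_or[of T w c] by (simp add: sub_dat_def)
next
  case (r_and w)
  have "\<forall>c\<in>set (ch T w). reaches T (A2, P2) c"
    using r_and.IH desc_child[OF wf v r_and.prems] by (simp add: sub_dat_def)
  then show ?case
    using r_and.hyps(1) reaches.r_and[of T w] by (simp add: sub_dat_def)
next
  case (r_sand w)
  have children: "\<forall>c\<in>set (ch T w). c \<in> desc T v"
    using desc_child[OF wf v r_sand.prems] by blast
  show ?case
  proof (rule reaches.r_sand)
    show "gtype T w = SAND"
      using r_sand.hyps(1) by (simp add: sub_dat_def)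
    show "\<forall>c\<in>set (ch T w). reaches T (A2, P2) c"
      using r_sand.IH children by (simp add: sub_dat_def)
    show "\<forall>i. Suc i < length (ch T w) \<longrightarrow>
        (\<forall>a\<in>fst (A2, P2) \<inter> bas_below T (ch T w ! i).
          \<forall>a'\<in>fst (A2, P2) \<inter> bas_below T (ch T w ! Suc i). (a, a') \<in> snd (A2, P2))"
    proof (intro allI impI)
      fix i assume i: "Suc i < length (ch T w)"
      then have "ch T w ! i \<in> desc T v" and "ch T w ! Suc i \<in> desc T v"
        using children by simp_all
      moreover have "\<forall>a\<in>B \<inter> bas_below (sub_dat T v) (ch T w ! i).
          \<forall>a'\<in>B \<inter> bas_below (sub_dat T v) (ch T w ! Suc i). (a, a') \<in> Q"
        using r_sand.hyps(2) i by (simp add: sub_dat_def)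
      ultimately show "\<forall>a\<in>fst (A2, P2) \<inter> bas_below T (ch T w ! i).
          \<forall>a'\<in>fst (A2, P2) \<inter> bas_below T (ch T w ! Suc i). (a, a') \<in> snd (A2, P2)"
        using precedes_lift_from_sub_dat[OF wf v _ _ A2_inside Q_sub] by simp
    qed
  qed
qed

lemma contract_inner_node:
  assumes md: "is_module T v" and inner: "gtype (contract T v) w \<noteq> BAS"
    and w: "w \<in> nodes T" "w \<notin> desc T v - {v}"
  shows "gtype (contract T v) w = gtype T w" and "ch (contract T v) w = ch T w"
    and "\<And>c. c \<in> set (ch T w) \<Longrightarrow> c \<notin> desc T v - {v}"
proof -
  have "w \<noteq> v"
    using inner by (auto simp: contract_def)
  then show "gtype (contract T v) w = gtype T w" and "ch (contract T v) w = ch T w"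
    by (simp_all add: contract_def)
  show "c \<notin> desc T v - {v}" if "c \<in> set (ch T w)" for c
    using module_child_outside[OF md w(1) _ that] w(2) \<open>w \<noteq> v\<close> by blast
qed

lemma precedes_lift_from_contract:
  assumes md: "is_module T v" and A_outside: "A \<inter> desc T v \<subseteq> {v}" and B_inside: "B \<subseteq> desc T v"
    and v_in_A: "B \<noteq> {} \<Longrightarrow> v \<in> A"
    and A2: "A2 = A - {v} \<union> B"
    and order: "\<And>x y. x \<in> A2 \<Longrightarrow> y \<in> A2 \<Longrightarrow> (collapse B v x, collapse B v y) \<in> P \<Longrightarrow> (x, y) \<in> P2"
    and c: "c \<notin> desc T v - {v}" and c': "c' \<notin> desc T v - {v}"
    and prec: "\<forall>a\<in>A \<inter> bas_below (contract T v) c. \<forall>a'\<in>A \<inter> bas_below (contract T v) c'. (a, a') \<in> P"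
  shows "\<forall>a\<in>A2 \<inter> bas_below T c. \<forall>a'\<in>A2 \<inter> bas_below T c'. (a, a') \<in> P2"
proof (intro ballI)
  fix a a' assume a: "a \<in> A2 \<inter> bas_below T c" and a': "a' \<in> A2 \<inter> bas_below T c'"
  then have "collapse B v a \<in> A \<inter> bas_below (contract T v) c"
    and "collapse B v a' \<in> A \<inter> bas_below (contract T v) c'"
    using collapse_in_bas_below_contract[OF md A_outside B_inside v_in_A] c c' A2 by auto
  then show "(a, a') \<in> P2"
    using prec order a a' by blast
qed

lemma reaches_lift_from_contract:
  assumes wf: "wf_dat T" and md: "is_module T v"
    and A_outside: "A \<inter> desc T v \<subseteq> {v}" and B_inside: "B \<subseteq> desc T v"
    and v_in_A: "B \<noteq> {} \<Longrightarrow> v \<in> A"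
    and A2: "A2 = A - {v} \<union> B"
    and order: "\<And>x y. x \<in> A2 \<Longrightarrow> y \<in> A2 \<Longrightarrow> (collapse B v x, collapse B v y) \<in> P \<Longrightarrow> (x, y) \<in> P2"
    and reach_v: "v \<in> A \<Longrightarrow> reaches T (A2, P2) v"
    and reach: "reaches (contract T v) (A, P) w" and w: "w \<in> nodes T" "w \<notin> desc T v - {v}"
  shows "reaches T (A2, P2) w"
  using reach w
proof (induction rule: reaches.induct)
  case (r_bas w)
  show ?case
  proof (cases "w = v")
    case True
    then show ?thesis
      using reach_v r_bas.hyps(2) by simp
  next
    case False
    then have "gtype T w = BAS" and "w \<in> A2"
      using r_bas.hyps A2 by (auto simp: contract_def)
    then show ?thesis
      using reaches.r_bas[of T w "(A2, P2)"] by simp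
  qed
next
  case (r_or w c)
  note node = contract_inner_node[OF md _ r_or.prems]
  have c: "c \<in> set (ch T w)"
    using r_or.hyps node by simp
  then have "reaches T (A2, P2) c"
    using r_or.IH wf_dat_child_in_nodes[OF wf r_or.prems(1) c] node(3)[OF _ c] r_or.hyps(1) by simp
  then show ?case
    using reaches.r_or[of T w c] r_or.hyps(1) node c by simp
next
  case (r_and w)
  note node = contract_inner_node[OF md _ r_and.prems]
  have "\<forall>c\<in>set (ch T w). reaches T (A2, P2) c"
    using r_and.IH r_and.hyps(1) node wf_dat_child_in_nodes[OF wf r_and.prems(1)] by simp
  then show ?case
    using reaches.r_and[of T w] r_and.hyps(1) node by simp
next
  case (r_sand w)
  note node = contract_inner_node[OF md _ r_sand.prems]
  show ?case
  proof (rule reaches.r_sand)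
    show "gtype T w = SAND"
      using r_sand.hyps(1) node by simp
    show "\<forall>c\<in>set (ch T w). reaches T (A2, P2) c"
      using r_sand.IH r_sand.hyps(1) node wf_dat_child_in_nodes[OF wf r_sand.prems(1)] by simp
    show "\<forall>i. Suc i < length (ch T w) \<longrightarrow>
        (\<forall>a\<in>fst (A2, P2) \<inter> bas_below T (ch T w ! i).
          \<forall>a'\<in>fst (A2, P2) \<inter> bas_below T (ch T w ! Suc i). (a, a') \<in> snd (A2, P2))"
    proof (intro allI impI)
      fix i assume i: "Suc i < length (ch T w)"
      then have "ch T w ! i \<notin> desc T v - {v}" and "ch T w ! Suc i \<notin> desc T v - {v}"
        using node(3) r_sand.hyps(1) by simp_all
      moreover have "\<forall>a\<in>A \<inter> bas_below (contract T v) (ch T w ! i).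
          \<forall>a'\<in>A \<inter> bas_below (contract T v) (ch T w ! Suc i). (a, a') \<in> P"
        using r_sand.hyps i node r_sand.hyps(1) by simp
      ultimately show "\<forall>a\<in>fst (A2, P2) \<inter> bas_below T (ch T w ! i).
          \<forall>a'\<in>fst (A2, P2) \<inter> bas_below T (ch T w ! Suc i). (a, a') \<in> snd (A2, P2)"
        using precedes_lift_from_contract[OF md A_outside B_inside v_in_A A2 order] by simp
    qed
  qed
qed

lemma attack_on_contract:
  assumes "v \<in> nodes T" and "is_attack (contract T v) (A, P)"
  shows "A - {v} \<subseteq> bas_nodes T" and "A \<inter> desc T v \<subseteq> {v}"
  using assms bas_nodes_contract[OF assms(1)] unfolding is_attack_def by auto

lemma successful_contract_avoiding:
  assumes wf: "wf_dat T" and md: "is_module T v"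
    and succ: "successful (contract T v) (A, P)" and v_notin: "v \<notin> A"
  shows "successful T (A, P)"
proof -
  have v: "v \<in> nodes T"
    using is_module_in_nodes[OF md] .
  have attack: "is_attack (contract T v) (A, P)" and reach: "reaches (contract T v) (A, P) (root T)"
    using succ unfolding successful_def by (simp_all add: root_contract)
  note A = attack_on_contract[OF v attack]
  have "reaches T (A, P) (root T)"
  proof (rule reaches_lift_from_contract[OF wf md A(2), where B = "{}"])
    show "A = A - {v} \<union> {}"
      using v_notin by simp
  qed (use reach v_notin wf_dat_root_in_nodes[OF wf] root_notin_proper_desc[OF wf v]
       in \<open>simp_all add: collapse_def\<close>)
  moreover have "is_attack T (A, P)"
    using attack A(1) v_notin unfolding is_attack_def by simp
  ultimately show ?thesis
    unfolding successful_def by simp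
qed

lemma order_substitution_if_successful:
  assumes wf: "wf_dat T" and md: "is_module T v"
    and attack: "is_attack (contract T v) (A, P)" and v_in_A: "v \<in> A"
    and succ: "successful (sub_dat T v) (B, Q)"
  shows "order_substitution A P B Q v"
proof -
  have v: "v \<in> nodes T" and v_inner: "gtype T v \<noteq> BAS"
    using md unfolding is_module_def by simp_all
  have fin: "finite (nodes T)"
    using wf_dat_finite_nodes[OF wf] .
  note A = attack_on_contract[OF v attack]
  have B_sub: "B \<subseteq> bas_below T v" and B_attack: "is_attack (sub_dat T v) (B, Q)"
    using succ unfolding successful_def is_attack_def bas_nodes_sub_dat by simp_all
  then have B_desc: "B \<subseteq> desc T v" and v_notin_B: "v \<notin> B"
    using v_inner unfolding bas_below_def by auto
  have "reaches (sub_dat T v) (B, Q) v" and "v \<in> nodes (sub_dat T v)"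
    using succ unfolding successful_def by (simp_all add: root_sub_dat sub_dat_def desc_refl)
  then have "B \<noteq> {}"
    using reaches_nonempty[OF _ wf_sub_dat[OF wf v]] by fastforce
  moreover have "finite A"
    using A(1) v fin unfolding bas_nodes_def by (auto intro: finite_subset[OF _ fin])
  moreover have "finite B"
    using finite_subset[OF B_desc] finite_subset[OF desc_subset_nodes[OF wf v] fin] by simp
  moreover have "A \<inter> B = {}"
    using A(2) B_desc v_notin_B by blast
  ultimately show ?thesis
    using attack B_attack v_in_A unfolding is_attack_def by unfold_locales simp_all
qed

context order_substitution
begin

lemma successful_substituted:
  fixes T :: "'a dat"
  assumes wf: "wf_dat T" and md: "is_module T v"
    and succ_contract: "successful (contract T v) (A, P)" and succ_sub: "successful (sub_dat T v) (B, Q)"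
  shows "successful T (A', P')"
proof -
  have v: "v \<in> nodes T"
    using is_module_in_nodes[OF md] .
  have attack: "is_attack (contract T v) (A, P)" and reach: "reaches (contract T v) (A, P) (root T)"
    using succ_contract unfolding successful_def by (simp_all add: root_contract)
  note A = attack_on_contract[OF v attack]
  have B_bas: "B \<subseteq> bas_below T v"
    using succ_sub unfolding successful_def is_attack_def bas_nodes_sub_dat by simp
  then have B_desc: "B \<subseteq> desc T v"
    unfolding bas_below_def by auto
  have reach_B: "reaches (sub_dat T v) (B, Q) v"
    using succ_sub unfolding successful_def by (simp add: root_sub_dat)
  have "reaches T (A', P') v"
    using reaches_lift_from_sub_dat[OF wf v reach_B desc_refl] A(2) Q_on_B P'_inside_B by blast
  then have "reaches T (A', P') (root T)"
    using reaches_lift_from_contract[OF wf md A(2) B_desc _ refl P'_if_collapse _ reach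
        wf_dat_root_in_nodes[OF wf] root_notin_proper_desc[OF wf v]] v_in_A
    by blast
  moreover have "is_attack T (A', P')"
    using A(1) B_bas P'_strict_partial_order unfolding is_attack_def bas_nodes_def bas_below_def
    using desc_subset_nodes[OF wf v] by auto
  ultimately show ?thesis
    unfolding successful_def by simp
qed

end

theorem mainTheorem10:
  fixes T :: "'n dat" and v :: 'n and d :: "'n \<Rightarrow> real"
    and Att :: "'n set \<times> ('n \<times> 'n) set"
  assumes "wf_dat T"
    and "\<forall>a \<in> bas_nodes T. d a \<ge> 0"
    and "is_module T v"
    and "min_time (sub_dat T v) d < \<infinity>"
    and "successful (contract T v) Att"
  shows "\<exists>Att'. successful T Att' \<and> att_time Att' d = att_time Att (contract_dur T v d)"
proof -
  obtain A P where Att: "Att = (A, P)"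
    by (cases Att)
  with assms(5) have succ: "successful (contract T v) (A, P)"
    by simp
  have "finite (nodes (sub_dat T v))"
    using wf_dat_finite_nodes[OF wf_sub_dat[OF assms(1) is_module_in_nodes[OF assms(3)]]] .
  then obtain B Q where opt: "successful (sub_dat T v) (B, Q)"
    and "min_time (sub_dat T v) d = ereal (att_time (B, Q) d)"
    using min_time_attained[OF _ assms(4)] by auto
  then have dur: "contract_dur T v d = d(v := att_time (B, Q) d)"
    unfolding contract_dur_def by simp
  show ?thesis
  proof (cases "v \<in> A")
    case True
    then interpret order_substitution A P B Q v
      using order_substitution_if_successful[OF assms(1,3) _ _ opt] succ unfolding successful_def by blast
    show ?thesis
      unfolding Att dur using successful_substituted[OF assms(1,3) succ opt] att_time_substituted by blast
  next
    case False
    then have "att_time (A, P) d = att_time (A, P) (contract_dur T v d)"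
      unfolding dur by (intro att_time_cong) auto
    then show ?thesis
      unfolding Att using successful_contract_avoiding[OF assms(1,3) succ False] by blast
  qed
qed

end
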